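(* Let $f$ be an additive function from the positive integers to the nonnegative integers with $f(p)\ge1$ for every prime $p$. Every positive integer is $f$-practical if and only if $f(p^k)\le 1+\sum_{i=0}^{k-1}f(p^i)$ for every prime $p$ and every positive integer $k$.
   Context: $f$ additive means $f(ab)=f(a)+f(b)$ whenever $\gcd(a,b)=1$ (so $f(1)=0$). $S_f(n)=\sum_{d\mid n}f(d)$. A positive integer $n$ is $f$-practical if every positive integer $m\le S_f(n)$ equals $\sum_{d\in\mathcal{D}}f(d)$ for some set $\mathcal{D}$ of distinct divisors of $n$. *)

theory Defs
  imports "HOL-Computational_Algebra.Primes"
begin

definition additive :: "(nat \<Rightarrow> nat) \<Rightarrow> bool" where
  "additive f \<longleftrightarrow> (\<forall>a b. a > 0 \<longrightarrow> b > 0 \<longrightarrow> coprime a b \<longrightarrow> f (a * b) = f a + f b)"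

definition S_f :: "(nat \<Rightarrow> nat) \<Rightarrow> nat \<Rightarrow> nat" where
  "S_f f n = (\<Sum>d | d dvd n. f d)"

definition f_practical :: "(nat \<Rightarrow> nat) \<Rightarrow> nat \<Rightarrow> bool" where
  "f_practical f n \<longleftrightarrow> (\<forall>m. 0 < m \<and> m \<le> S_f f n \<longrightarrow>
      (\<exists>D. D \<subseteq> {d. d dvd n} \<and> m = (\<Sum>d\<in>D. f d)))"

end

theory Submission
  imports Defs
begin

text \<open>Call a finite set of weighted divisors complete if every integer up to its total weight
is the weight of one of its subsets. Adjoining an element whose weight exceeds the current total
by at most one keeps a set complete. The divisors of \<open>m p^(j+1)\<close> (with \<open>p\<close> not dividing
\<open>m\<close>) are those of \<open>m p^j\<close> together with the \<open>d p^(j+1)\<close> for \<open>d\<close> dividing \<open>m\<close>, and by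
additivity \<open>f(d p^(j+1)) = f d + f(p^(j+1)) \<le> S_f m + 1 + (\<Sum>i\<le>j. f(p^i)) \<le> 1 + S_f (m p^j)\<close>
under the prime power bound; induction over the factorisation makes every divisor set
complete. Conversely, if the bound fails at \<open>p^k\<close>, then \<open>1 + (\<Sum>i<k. f(p^i))\<close> is not a subset
sum over the divisors of \<open>p^k\<close>.\<close>

definition subset_sums_complete :: "('a \<Rightarrow> nat) \<Rightarrow> 'a set \<Rightarrow> bool" where
  "subset_sums_complete f A \<longleftrightarrow> (\<forall>m. m \<le> sum f A \<longrightarrow> (\<exists>D. D \<subseteq> A \<and> m = sum f D))"

lemma subset_sums_complete_insert:
  assumes "finite A" "x \<notin> A" "subset_sums_complete f A" "f x \<le> 1 + sum f A"
  shows "subset_sums_complete f (insert x A)"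
  unfolding subset_sums_complete_def
proof (intro allI impI)
  fix m assume m: "m \<le> sum f (insert x A)"
  show "\<exists>D. D \<subseteq> insert x A \<and> m = sum f D"
  proof (cases "m \<le> sum f A")
    case True
    then show ?thesis using assms(3) unfolding subset_sums_complete_def by blast
  next
    case False
    then have "m - f x \<le> sum f A" using m assms(1,2) by simp
    then obtain D where D: "D \<subseteq> A" "m - f x = sum f D"
      using assms(3) unfolding subset_sums_complete_def by blast
    have "finite D" "x \<notin> D" using D(1) assms(1,2) finite_subset by blast+
    then have "m = sum f (insert x D)" using D(2) False assms(4) by simp
    then show ?thesis using D(1) by blast
  qed
qed

lemma subset_sums_complete_Un:
  assumes "finite B" "finite A" "A \<inter> B = {}" "subset_sums_complete f A"
    and "\<forall>x\<in>B. f x \<le> 1 + sum f A"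
  shows "subset_sums_complete f (A \<union> B)"
  using assms
proof (induction B rule: finite_induct)
  case empty
  then show ?case by simp
next
  case (insert x B)
  have "sum f A \<le> sum f (A \<union> B)"
    using insert.hyps(1) insert.prems(1) by (intro sum_mono2) auto
  then have "f x \<le> 1 + sum f (A \<union> B)" using insert.prems(4) by force
  moreover have "x \<notin> A \<union> B" using insert.hyps(2) insert.prems(2) by blast
  ultimately show ?case
    using subset_sums_complete_insert[of "A \<union> B" x f] insert by simp
qed

lemma f_practical_iff_subset_sums_complete:
  "f_practical f n \<longleftrightarrow> subset_sums_complete f {d. d dvd n}"
  unfolding f_practical_def subset_sums_complete_def S_f_def
proof (intro iffI allI impI)
  fix m
  assume H: "\<forall>m. 0 < m \<and> m \<le> sum f {d. d dvd n} \<longrightarrow> (\<exists>D\<subseteq>{d. d dvd n}. m = sum f D)"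
    and m: "m \<le> sum f {d. d dvd n}"
  show "\<exists>D\<subseteq>{d. d dvd n}. m = sum f D"
  proof (cases "m = 0")
    case True
    then show ?thesis by (intro exI[of _ "{}"]) simp
  qed (use H m in simp)
qed blast

lemma additive_imp_f_1:
  assumes "additive f" shows "f 1 = 0"
  using assms[unfolded additive_def, rule_format, of 1 1] by simp

lemma additive_mult_prime_power:
  assumes "additive f" "prime p" "\<not> p dvd d" "d > 0"
  shows "f (d * p ^ k) = f d + f (p ^ k)"
proof -
  have "coprime d (p ^ k)"
    using prime_imp_coprime[OF assms(2,3)] by (simp add: coprime_commute)
  moreover have "p ^ k > 0" using prime_gt_0_nat[OF assms(2)] by simp
  ultimately show ?thesis using assms(1)[unfolded additive_def, rule_format, of d "p ^ k"] assms(4) by blast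
qed

lemma divisors_prime_power:
  assumes "prime (p::nat)"
  shows "{d. d dvd p ^ k} = (\<lambda>i. p ^ i) ` {..k}"
  using divides_primepow_nat[OF assms] by auto

lemma sum_image_prime_powers:
  assumes "prime (p::nat)"
  shows "sum f ((\<lambda>i. p ^ i) ` I) = (\<Sum>i\<in>I. f (p ^ i))"
proof -
  have "inj_on (\<lambda>i. p ^ i) I"
    using prime_gt_1_nat[OF assms] by (auto simp: inj_on_def power_inject_exp)
  then show ?thesis by (simp add: sum.reindex)
qed

lemma divisors_mult_prime_power_Suc:
  fixes m p j :: nat
  assumes "prime p"
  shows "{d. d dvd m * p ^ Suc j} = {d. d dvd m * p ^ j} \<union> (\<lambda>d. d * p ^ Suc j) ` {d. d dvd m}"
proof
  show "{d. d dvd m * p ^ Suc j} \<subseteq> {d. d dvd m * p ^ j} \<union> (\<lambda>d. d * p ^ Suc j) ` {d. d dvd m}"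
  proof
    fix d assume "d \<in> {d. d dvd m * p ^ Suc j}"
    then obtain x y where xy: "d = x * y" "x dvd m" "y dvd p ^ Suc j"
      by (auto elim: dvd_productE)
    then obtain i where i: "i \<le> Suc j" "y = p ^ i" using divides_primepow_nat[OF assms] by blast
    show "d \<in> {d. d dvd m * p ^ j} \<union> (\<lambda>d. d * p ^ Suc j) ` {d. d dvd m}"
    proof (cases "i = Suc j")
      case False
      then have "y dvd p ^ j" using i by (simp add: le_imp_power_dvd)
      then show ?thesis using xy by (simp add: mult_dvd_mono)
    qed (use xy i in auto)
  qed
next
  have "m * p ^ j dvd m * p ^ Suc j" by (simp add: mult_dvd_mono)
  then show "{d. d dvd m * p ^ j} \<union> (\<lambda>d. d * p ^ Suc j) ` {d. d dvd m} \<subseteq> {d. d dvd m * p ^ Suc j}"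
    by (auto intro: dvd_trans mult_dvd_mono)
qed

lemma divisors_disjoint_multiples_prime_power_Suc:
  fixes m p j :: nat
  assumes "prime p" "\<not> p dvd m"
  shows "{d. d dvd m * p ^ j} \<inter> (\<lambda>d. d * p ^ Suc j) ` {d. d dvd m} = {}"
proof (rule ccontr)
  assume "\<not> ?thesis"
  then obtain d where "d * p ^ Suc j dvd m * p ^ j" by blast
  then have "(d * p) * p ^ j dvd m * p ^ j" by (simp add: mult_ac)
  then have "d * p dvd m" using prime_gt_0_nat[OF assms(1)] by simp
  then show False using assms(2) by (meson dvd_mult_right)
qed

lemma S_f_mult_prime_power_ge:
  fixes m p j :: nat
  assumes "f 1 = 0" "prime p" "\<not> p dvd m" "m > 0"
  shows "S_f f m + (\<Sum>i\<le>j. f (p ^ i)) \<le> S_f f (m * p ^ j)"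
proof -
  \<comment> \<open>\<open>p^0 = 1\<close> is already a divisor of \<open>m\<close>, and \<open>f 1 = 0\<close>\<close>
  let ?P = "(\<lambda>i. p ^ i) ` {1..j}"
  have p1: "p > 1" using assms(2) prime_gt_1_nat by blast
  have "{d. d dvd m} \<inter> ?P = {}"
    using assms(3) by (auto simp: dvd_power_iff_le p1 elim: dvd_trans[rotated])
  then have "sum f {d. d dvd m} + sum f ?P = sum f ({d. d dvd m} \<union> ?P)"
    using assms(4) by (simp add: sum.union_disjoint)
  also have "\<dots> \<le> S_f f (m * p ^ j)"
    unfolding S_f_def using le_imp_power_dvd[of _ j p] assms(4) p1
    by (intro sum_mono2) (auto intro: dvd_mult2 dvd_mult)
  finally have "sum f {d. d dvd m} + sum f ?P \<le> S_f f (m * p ^ j)" .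
  moreover have "(\<Sum>i\<le>j. f (p ^ i)) = sum f ?P"
    using assms(1) by (simp add: sum_image_prime_powers[OF assms(2)] atMost_atLeast0
        sum.atLeast_Suc_atMost)
  ultimately show ?thesis unfolding S_f_def by simp
qed

lemma subset_sums_complete_divisors_mult_prime_power:
  fixes f :: "nat \<Rightarrow> nat"
  assumes add: "additive f" and p: "prime p" and pm: "\<not> p dvd m" and m0: "m > 0"
    and cm: "subset_sums_complete f {d. d dvd m}"
    and bound: "\<And>k. k > 0 \<Longrightarrow> f (p ^ k) \<le> 1 + (\<Sum>i<k. f (p ^ i))"
  shows "subset_sums_complete f {d. d dvd m * p ^ j}"
proof (induction j)
  case 0
  then show ?case using cm by simp
next
  case (Suc j)
  let ?A = "{d. d dvd m * p ^ j}"
  let ?B = "(\<lambda>d. d * p ^ Suc j) ` {d. d dvd m}"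
  have p0: "p > 0" using p prime_gt_0_nat by blast
  have "\<forall>x\<in>?B. f x \<le> 1 + sum f ?A"
  proof
    fix x assume "x \<in> ?B"
    then obtain d where d: "d dvd m" "x = d * p ^ Suc j" by auto
    have "\<not> p dvd d" "d > 0" using d(1) pm m0 by (auto intro: dvd_trans)
    then have "f x = f d + f (p ^ Suc j)" using additive_mult_prime_power[OF add p] d(2) by blast
    also have "\<dots> \<le> S_f f m + (1 + (\<Sum>i\<le>j. f (p ^ i)))"
      using bound[of "Suc j"] m0 d(1) unfolding S_f_def lessThan_Suc_atMost
      by (intro add_mono member_le_sum) auto
    also have "\<dots> \<le> 1 + sum f ?A"
      using S_f_mult_prime_power_ge[where f = f and j = j, OF additive_imp_f_1[OF add] p pm m0]
      unfolding S_f_def by simp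
    finally show "f x \<le> 1 + sum f ?A" .
  qed
  then have "subset_sums_complete f (?A \<union> ?B)"
    using subset_sums_complete_Un[of ?B ?A f] Suc.IH m0 p0
      divisors_disjoint_multiples_prime_power_Suc[OF p pm, of j]
    by simp
  then show ?case by (simp only: divisors_mult_prime_power_Suc[OF p])
qed

lemma subset_sums_complete_divisors:
  fixes f :: "nat \<Rightarrow> nat"
  assumes add: "additive f"
    and bound: "\<forall>p k. prime p \<longrightarrow> k > 0 \<longrightarrow> f (p ^ k) \<le> 1 + (\<Sum>i<k. f (p ^ i))"
    and "n > 0"
  shows "subset_sums_complete f {d. d dvd n}"
  using \<open>n > 0\<close>
proof (induction n rule: less_induct)
  case (less n)
  show ?case
  proof (cases "n = 1")
    case True
    then have "sum f {d. d dvd n} = 0" using additive_imp_f_1[OF add] by simp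
    then show ?thesis unfolding subset_sums_complete_def by (intro allI impI exI[of _ "{}"]) simp
  next
    case False
    then obtain p where p: "prime p" "p dvd n" using prime_factor_nat by blast
    obtain m where m: "n = p ^ multiplicity p n * m" "\<not> p dvd m"
      using multiplicity_decompose'[of n p] less.prems not_prime_unit[of p] p(1) by blast
    have "multiplicity p n > 0"
      using p less.prems by (simp add: prime_multiplicity_gt_zero_iff)
    then have "p ^ multiplicity p n > 1" by (rule one_less_power[OF prime_gt_1_nat[OF p(1)]])
    moreover have m0: "m > 0" using m(1) less.prems by (cases "m = 0") simp_all
    ultimately have "1 * m < p ^ multiplicity p n * m" by (rule mult_strict_right_mono)
    then have "m < n" using m(1) by simp
    then have "subset_sums_complete f {d. d dvd m}" using less.IH m0 by blast
    then have "subset_sums_complete f {d. d dvd m * p ^ multiplicity p n}"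
      using subset_sums_complete_divisors_mult_prime_power[OF add p(1) m(2) m0]
        bound[rule_format, OF p(1)] by blast
    then show ?thesis using m(1) by (simp only: mult.commute)
  qed
qed

lemma prime_power_bound_if_f_practical:
  assumes "prime p" "k > 0" "f_practical f (p ^ k)"
  shows "f (p ^ k) \<le> 1 + (\<Sum>i<k. f (p ^ i))"
proof (rule ccontr)
  assume big: "\<not> ?thesis"
  have S: "S_f f (p ^ k) = (\<Sum>i<k. f (p ^ i)) + f (p ^ k)"
    by (simp add: S_f_def divisors_prime_power[OF assms(1)] sum_image_prime_powers[OF assms(1)]
        lessThan_Suc_atMost[symmetric])
  have "0 < 1 + (\<Sum>i<k. f (p ^ i))" "1 + (\<Sum>i<k. f (p ^ i)) \<le> S_f f (p ^ k)"
    using big S by simp_all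
  then obtain D where D: "D \<subseteq> (\<lambda>i. p ^ i) ` {..k}" "1 + (\<Sum>i<k. f (p ^ i)) = sum f D"
    using assms(3)[unfolded f_practical_def, rule_format, of "1 + (\<Sum>i<k. f (p ^ i))"]
    by (auto simp: divisors_prime_power[OF assms(1)])
  have fin: "finite D" using D(1) by (rule finite_subset) simp
  show False
  proof (cases "p ^ k \<in> D")
    case True
    then have "f (p ^ k) \<le> sum f D" using fin by (intro member_le_sum) auto
    then show False using D(2) big by simp
  next
    case False
    have "D \<subseteq> (\<lambda>i. p ^ i) ` {..<k}"
    proof
      fix d assume "d \<in> D"
      then obtain i where i: "i \<le> k" "d = p ^ i" using D(1) by auto
      then have "i \<noteq> k" using \<open>d \<in> D\<close> False by auto
      then show "d \<in> (\<lambda>i. p ^ i) ` {..<k}" using i by simp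
    qed
    then have "sum f D \<le> sum f ((\<lambda>i. p ^ i) ` {..<k})" by (intro sum_mono2) auto
    also have "\<dots> = (\<Sum>i<k. f (p ^ i))" by (rule sum_image_prime_powers[OF assms(1)])
    finally show False using D(2) by simp
  qed
qed

theorem corollary6p2:
  fixes f :: "nat \<Rightarrow> nat"
  assumes "additive f"
    and "\<And>p. prime p \<Longrightarrow> f p \<ge> 1"
  shows "(\<forall>n. n > 0 \<longrightarrow> f_practical f n) \<longleftrightarrow>
         (\<forall>p k. prime p \<longrightarrow> k > 0 \<longrightarrow> f (p ^ k) \<le> 1 + (\<Sum>i<k. f (p ^ i)))"
proof
  assume "\<forall>n. n > 0 \<longrightarrow> f_practical f n"
  then show "\<forall>p k. prime p \<longrightarrow> k > 0 \<longrightarrow> f (p ^ k) \<le> 1 + (\<Sum>i<k. f (p ^ i))"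
    by (metis prime_power_bound_if_f_practical prime_gt_0_nat zero_less_power)
next
  assume "\<forall>p k. prime p \<longrightarrow> k > 0 \<longrightarrow> f (p ^ k) \<le> 1 + (\<Sum>i<k. f (p ^ i))"
  then show "\<forall>n. n > 0 \<longrightarrow> f_practical f n"
    using subset_sums_complete_divisors[OF assms(1)] f_practical_iff_subset_sums_complete by blast
qed

end
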